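(* Let $\epsilon>0$, $q>0$, let $\Lambda_\epsilon$ be an $\epsilon$-lattice under the $\ell_2$ norm, let $\mathbf{x}\in\mathbb{R}^d$, and let $\boldsymbol\theta$ be uniformly random in $\mathbf{Vor}(\mathbf{0})$. Then the number of lattice points $\boldsymbol\lambda\in\Lambda_\epsilon$ with $\mathbf{x}+\boldsymbol\theta\in\mathbf{Vor}^+(\boldsymbol\lambda)$ is at most $(1+2q)^{2d}$ with probability at least $1-(1+2q)^{-d}$.
   Context: A lattice is the set of integer combinations of a basis of $\mathbb{R}^d$. Under $\ell_2$, its packing radius $r_p$ is the supremum of $r$ such that balls of radius $r$ around distinct lattice points are disjoint and its cover radius $r_c$ is the infimum of $r$ such that balls of radius $r$ around lattice points cover $\mathbb{R}^d$; an $\epsilon$-lattice has $\epsilon=r_p\le r_c\le3\epsilon$. The Voronoi region of $\boldsymbol\lambda$ is $\mathbf{Vor}(\boldsymbol\lambda)=\{\mathbf{x}:\|\mathbf{x}-\boldsymbol\lambda\|_2<\|\mathbf{x}-\boldsymbol\lambda'\|_2\ \forall\boldsymbol\lambda'\in\Lambda_\epsilon\setminus\{\boldsymbol\lambda\}\}$. The expanded Voronoi region $\mathbf{Vor}^+(\boldsymbol\lambda)$ is the set of points within $\ell_2$ distance $2q\epsilon$ of $\mathbf{Vor}(\boldsymbol\lambda)$. *)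

theory Defs
  imports "HOL-Analysis.Analysis" "HOL-Probability.Probability"
begin

definition is_basis :: "'a::euclidean_space set \<Rightarrow> bool" where
  "is_basis B \<longleftrightarrow> independent B \<and> finite B \<and> card B = DIM('a)"

definition lattice_of :: "'a::euclidean_space set \<Rightarrow> 'a set" where
  "lattice_of B = {v. \<exists>c::'a \<Rightarrow> int. v = (\<Sum>b\<in>B. of_int (c b) *\<^sub>R b)}"

definition is_lattice :: "'a::euclidean_space set \<Rightarrow> bool" where
  "is_lattice L \<longleftrightarrow> (\<exists>B. is_basis B \<and> L = lattice_of B)"

definition packing_radius :: "'a::euclidean_space set \<Rightarrow> real" where
  "packing_radius L = Sup {r. r \<ge> 0 \<and>
     (\<forall>l\<in>L. \<forall>l'\<in>L. l \<noteq> l' \<longrightarrow> ball l r \<inter> ball l' r = {})}"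

definition cover_radius :: "'a::euclidean_space set \<Rightarrow> real" where
  "cover_radius L = Inf {r. r \<ge> 0 \<and> (\<Union>l\<in>L. cball l r) = UNIV}"

definition eps_lattice :: "real \<Rightarrow> 'a::euclidean_space set \<Rightarrow> bool" where
  "eps_lattice \<epsilon> L \<longleftrightarrow> is_lattice L \<and> packing_radius L = \<epsilon> \<and>
     \<epsilon> \<le> cover_radius L \<and> cover_radius L \<le> 3 * \<epsilon>"

definition Vor :: "'a::euclidean_space set \<Rightarrow> 'a \<Rightarrow> 'a set" where
  "Vor L l = {x. \<forall>l'\<in>L - {l}. dist x l < dist x l'}"

definition Vor_plus :: "real \<Rightarrow> real \<Rightarrow> 'a::euclidean_space set \<Rightarrow> 'a \<Rightarrow> 'a set" where
  "Vor_plus q \<epsilon> L l = {x. infdist x (Vor L l) \<le> 2 * q * \<epsilon>}"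

end

theory Submission
  imports Defs
begin

text \<open>
  Let V be the Voronoi cell of 0 and W = Vor+(0). Since the lattice acts on its cells by
  translation, x + \<theta> \<in> Vor+(\<lambda>) iff \<theta> + (x - \<lambda>) \<in> W, and the translates V + (x - \<lambda>) are
  pairwise disjoint; hence the integral over \<theta> \<in> V of the number N(\<theta>) of such \<lambda> is at most
  vol W. The closed cell C is convex, contains the ball of radius \<epsilon> and differs from V only on
  countably many hyperplanes, so every point within 2q\<epsilon> of V lies in (1 + 2q) C and
  vol W \<le> (1 + 2q)^d vol V. Markov's inequality for the uniform distribution on V bounds the
  probability that N(\<theta>) > (1 + 2q)^(2d) by (1 + 2q)^(-d).
\<close>

lemma lattice_zero:
  assumes "is_lattice L"
  shows "0 \<in> L"
  using assms unfolding is_lattice_def lattice_of_def by (auto intro!: exI[of _ "\<lambda>_. 0"])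

lemma lattice_diff:
  assumes "is_lattice L" "a \<in> L" "b \<in> L"
  shows "a - b \<in> L"
proof -
  obtain B where L: "L = lattice_of B" using assms(1) is_lattice_def by blast
  obtain c1 c2 where "a = (\<Sum>v\<in>B. of_int (c1 v) *\<^sub>R v)" "b = (\<Sum>v\<in>B. of_int (c2 v) *\<^sub>R v)"
    using assms(2,3) unfolding L lattice_of_def by blast
  then have "a - b = (\<Sum>v\<in>B. of_int (c1 v - c2 v) *\<^sub>R v)"
    by (simp add: sum_subtractf[symmetric] scaleR_diff_left)
  then show ?thesis unfolding L lattice_of_def by (intro CollectI exI)
qed

lemma lattice_uminus:
  assumes "is_lattice L" "l \<in> L"
  shows "- l \<in> L"
  using lattice_diff[OF assms(1) lattice_zero[OF assms(1)] assms(2)] by simp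

lemma lattice_add:
  assumes "is_lattice L" "a \<in> L" "b \<in> L"
  shows "a + b \<in> L"
  using lattice_diff[OF assms(1,2) lattice_uminus[OF assms(1,3)]] by simp

lemma lattice_translation:
  assumes "is_lattice L" "l \<in> L"
  shows "(+) l ` L = L"
proof (intro set_eqI iffI)
  fix m assume "m \<in> L"
  then have "m - l \<in> L" using assms lattice_diff by blast
  then show "m \<in> (+) l ` L" by (intro image_eqI[of _ _ "m - l"]) auto
qed (use assms lattice_add in blast)

lemma countable_lattice:
  assumes "is_lattice L"
  shows "countable L"
proof -
  obtain B where "finite B" and L: "L = lattice_of B"
    using assms is_lattice_def is_basis_def by blast
  define comb where "comb c = (\<Sum>v\<in>B. of_int (c v) *\<^sub>R v)" for c :: "'a \<Rightarrow> int"
  have "L \<subseteq> comb ` (B \<rightarrow>\<^sub>E UNIV)"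
  proof
    fix v assume "v \<in> L"
    then obtain c where "v = comb c" unfolding L lattice_of_def comb_def by blast
    also have "\<dots> = comb (restrict c B)" unfolding comb_def by (rule sum.cong) auto
    finally show "v \<in> comb ` (B \<rightarrow>\<^sub>E UNIV)" by auto
  qed
  moreover have "countable (B \<rightarrow>\<^sub>E (UNIV :: int set))"
    using \<open>finite B\<close> by (intro countable_PiE) auto
  ultimately show ?thesis by (meson countable_image countable_subset)
qed

lemma lattice_relatively_dense:
  assumes "is_lattice (L :: 'a::euclidean_space set)"
  obtains R where "\<And>z. \<exists>l\<in>L. dist z l \<le> R"
proof -
  obtain B where B: "finite B" "independent B" "card B = DIM('a)" and L: "L = lattice_of B"
    using assms is_lattice_def is_basis_def by blast
  have "\<exists>l\<in>L. dist z l \<le> (\<Sum>v\<in>B. norm v)" for z :: 'a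
  proof -
    have "z \<in> span B" using card_ge_dim_independent[of B UNIV] B by auto
    then obtain u where u: "z = (\<Sum>v\<in>B. u v *\<^sub>R v)" using span_finite[OF \<open>finite B\<close>] by blast
    define l where "l = (\<Sum>v\<in>B. of_int \<lfloor>u v\<rfloor> *\<^sub>R v)"
    have "l \<in> L" unfolding L lattice_of_def l_def by (intro CollectI exI[of _ "\<lambda>v. \<lfloor>u v\<rfloor>"]) simp
    have "dist z l = norm (\<Sum>v\<in>B. (u v - of_int \<lfloor>u v\<rfloor>) *\<^sub>R v)"
      unfolding u l_def dist_norm by (simp add: sum_subtractf[symmetric] scaleR_diff_left)
    also have "\<dots> \<le> (\<Sum>v\<in>B. norm ((u v - of_int \<lfloor>u v\<rfloor>) *\<^sub>R v))"
      by (rule norm_sum)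
    also have "\<dots> \<le> (\<Sum>v\<in>B. norm v)"
    proof (rule sum_mono)
      fix v
      have "\<bar>u v - of_int \<lfloor>u v\<rfloor>\<bar> \<le> 1" by linarith
      then show "norm ((u v - of_int \<lfloor>u v\<rfloor>) *\<^sub>R v) \<le> norm v"
        by (simp add: mult_left_le_one_le)
    qed
    finally show ?thesis using \<open>l \<in> L\<close> by blast
  qed
  then show thesis using that by blast
qed

lemma packing_radius_le_half_dist:
  assumes "l \<in> L" "l' \<in> L" "l \<noteq> l'"
  shows "2 * packing_radius L \<le> dist l l'"
proof -
  define S where "S = {r. r \<ge> 0 \<and> (\<forall>l\<in>L. \<forall>l'\<in>L. l \<noteq> l' \<longrightarrow> ball l r \<inter> ball l' r = {})}"
  have "r \<le> dist l l' / 2" if "r \<in> S" for r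
  proof (rule ccontr)
    assume "\<not> r \<le> dist l l' / 2"
    then have "midpoint l l' \<in> ball l r \<inter> ball l' r" by (simp add: dist_midpoint)
    then show False using that assms unfolding S_def by blast
  qed
  moreover have "0 \<in> S" unfolding S_def by auto
  ultimately have "Sup S \<le> dist l l' / 2" by (intro cSup_least) auto
  then show ?thesis unfolding packing_radius_def S_def by simp
qed

definition Vor_closed :: "'a::euclidean_space set \<Rightarrow> 'a \<Rightarrow> 'a set" where
  "Vor_closed L l = {x. \<forall>l'\<in>L. dist x l \<le> dist x l'}"

lemma dist_le_dist_iff_halfspace:
  fixes a b x :: "'a::euclidean_space"
  shows "dist x a \<le> dist x b \<longleftrightarrow> (2 *\<^sub>R (b - a)) \<bullet> x \<le> b \<bullet> b - a \<bullet> a"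
  by (simp add: dist_norm norm_le inner_diff_left inner_diff_right inner_commute algebra_simps)

lemma dist_eq_dist_iff_hyperplane:
  fixes a b x :: "'a::euclidean_space"
  shows "dist x a = dist x b \<longleftrightarrow> (2 *\<^sub>R (b - a)) \<bullet> x = b \<bullet> b - a \<bullet> a"
  by (simp add: dist_norm norm_eq inner_diff_left inner_diff_right inner_commute algebra_simps)

lemma Vor_subset_Vor_closed: "Vor L l \<subseteq> Vor_closed L l"
  unfolding Vor_def Vor_closed_def by clarsimp (metis DiffI less_imp_le order_refl singletonD)

lemma closed_Vor_closed: "closed (Vor_closed L l)"
proof -
  have "Vor_closed L l = (\<Inter>l'\<in>L. {x. dist x l \<le> dist x l'})"
    unfolding Vor_closed_def by blast
  then show ?thesis by (simp only:) (intro closed_INT ballI closed_Collect_le continuous_intros)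
qed

lemma convex_Vor_closed: "convex (Vor_closed L l)"
proof -
  have "Vor_closed L l = (\<Inter>l'\<in>L. {x. (2 *\<^sub>R (l' - l)) \<bullet> x \<le> l' \<bullet> l' - l \<bullet> l})"
    unfolding Vor_closed_def dist_le_dist_iff_halfspace by blast
  then show ?thesis by (simp only:) (intro convex_INT ballI convex_halfspace_le)
qed

lemma Vor_disjoint:
  assumes "l \<in> L" "l' \<in> L" "l \<noteq> l'"
  shows "Vor L l \<inter> Vor L l' = {}"
proof (rule equals0I)
  fix x assume "x \<in> Vor L l \<inter> Vor L l'"
  then have "dist x l < dist x l'" "dist x l' < dist x l" using assms unfolding Vor_def by auto
  then show False by simp
qed

lemma sets_borel_Vor:
  assumes "countable L"
  shows "Vor L l \<in> sets borel"
proof -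
  have "{x \<in> space borel. \<forall>l'\<in>L - {l}. dist x l < dist x l'} \<in> sets borel"
    using assms by (intro sets.sets_Collect_countable_All') auto
  then show ?thesis unfolding Vor_def by simp
qed

lemma negligible_Vor_closed_diff_Vor:
  assumes "countable L"
  shows "negligible (Vor_closed L l - Vor L l)"
proof (rule negligible_subset)
  let ?H = "\<lambda>l'. {x. (2 *\<^sub>R (l' - l)) \<bullet> x = l' \<bullet> l' - l \<bullet> l}"
  have "negligible (?H l')" if "l' \<noteq> l" for l'
    using that by (intro negligible_hyperplane) simp
  then show "negligible (\<Union>l'\<in>L - {l}. ?H l')"
    using assms by (intro negligible_countable_Union) auto
  show "Vor_closed L l - Vor L l \<subseteq> (\<Union>l'\<in>L - {l}. ?H l')"
    unfolding Vor_def Vor_closed_def dist_eq_dist_iff_hyperplane[symmetric]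
    by (force simp: order_less_le)
qed

lemma emeasure_Vor_closed:
  assumes "countable L"
  shows "emeasure lborel (Vor_closed L l) = emeasure lborel (Vor L l)"
proof -
  have "Vor_closed L l - Vor L l \<in> sets borel"
    using borel_closed[OF closed_Vor_closed] sets_borel_Vor[OF assms] by (rule sets.Diff)
  then have "Vor_closed L l - Vor L l \<in> null_sets lborel"
    using negligible_Vor_closed_diff_Vor[OF assms]
    by (metis negligible_iff_null_sets null_sets_completion_iff sets_lborel)
  then have "emeasure lborel (Vor L l \<union> (Vor_closed L l - Vor L l)) = emeasure lborel (Vor L l)"
    using sets_borel_Vor[OF assms] by (intro emeasure_Un_null_set) auto
  then show ?thesis using Vor_subset_Vor_closed by (metis Diff_partition)
qed

lemma closed_Vor_plus: "closed (Vor_plus q e L l)"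
  unfolding Vor_plus_def by (intro closed_Collect_le continuous_intros)

lemma Vor_closed_subset_cball:
  assumes "\<And>z. \<exists>l'\<in>L. dist z l' \<le> R"
  shows "Vor_closed L l \<subseteq> cball l R"
proof
  fix x assume "x \<in> Vor_closed L l"
  moreover obtain l' where "l' \<in> L" "dist x l' \<le> R" using assms by blast
  ultimately show "x \<in> cball l R" unfolding Vor_closed_def by (force simp: dist_commute)
qed

lemma cball_subset_Vor_closed:
  assumes "\<And>l'. l' \<in> L \<Longrightarrow> l' \<noteq> l \<Longrightarrow> 2 * e \<le> dist l l'"
  shows "cball l e \<subseteq> Vor_closed L l"
proof
  fix x assume "x \<in> cball l e"
  then have "dist x l \<le> dist x l'" if "l' \<in> L" "l' \<noteq> l" for l'
    using assms[OF that] dist_triangle[of l l' x] by (simp add: dist_commute)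
  then show "x \<in> Vor_closed L l" unfolding Vor_closed_def by fastforce
qed

lemma ball_subset_Vor:
  assumes "\<And>l'. l' \<in> L \<Longrightarrow> l' \<noteq> l \<Longrightarrow> 2 * e \<le> dist l l'"
  shows "ball l e \<subseteq> Vor L l"
proof
  fix x assume "x \<in> ball l e"
  then have "dist x l < dist x l'" if "l' \<in> L" "l' \<noteq> l" for l'
    using assms[OF that] dist_triangle[of l l' x] by (simp add: dist_commute)
  then show "x \<in> Vor L l" unfolding Vor_def by blast
qed

lemma translation_imageI:
  fixes c :: "'a::group_add"
  assumes "\<And>x. c + x \<in> A \<longleftrightarrow> x \<in> B"
  shows "A = (+) c ` B"
proof (intro set_eqI iffI)
  fix y assume "y \<in> A"
  then have "-c + y \<in> B" using assms[of "-c + y"] by (simp add: add.assoc[symmetric])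
  then show "y \<in> (+) c ` B" by (intro image_eqI[of _ _ "-c + y"]) (simp_all add: add.assoc[symmetric])
qed (use assms in auto)

lemma mem_translation_image_iff:
  fixes c :: "'a::ab_group_add"
  shows "y \<in> (+) c ` A \<longleftrightarrow> y - c \<in> A"
proof
  assume "y - c \<in> A"
  then show "y \<in> (+) c ` A" by (intro image_eqI[of _ _ "y - c"]) auto
qed auto

lemma Vor_translation: "Vor ((+) c ` L) (c + l) = (+) c ` Vor L l"
proof -
  have "(+) c ` L - {c + l} = (+) c ` (L - {l})" by auto
  then have "c + x \<in> Vor ((+) c ` L) (c + l) \<longleftrightarrow> x \<in> Vor L l" for x
    unfolding Vor_def by simp
  then show ?thesis by (rule translation_imageI)
qed

lemma infdist_translation:
  fixes c x :: "'a::real_normed_vector"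
  shows "infdist (c + x) ((+) c ` S) = infdist x S"
  by (cases "S = {}") (simp_all add: infdist_def image_image)

lemma Vor_plus_translation: "Vor_plus q e ((+) c ` L) (c + l) = (+) c ` Vor_plus q e L l"
proof -
  have "c + x \<in> Vor_plus q e ((+) c ` L) (c + l) \<longleftrightarrow> x \<in> Vor_plus q e L l" for x
    by (simp add: Vor_plus_def Vor_translation infdist_translation)
  then show ?thesis by (rule translation_imageI)
qed

lemma Vor_lattice_translate:
  assumes "is_lattice L" "l \<in> L"
  shows "Vor L l = (+) l ` Vor L 0"
  using Vor_translation[of l L 0] lattice_translation[OF assms] by simp

lemma Vor_plus_lattice_translate:
  assumes "is_lattice L" "l \<in> L"
  shows "Vor_plus q e L l = (+) l ` Vor_plus q e L 0"
  using Vor_plus_translation[of q e l L 0] lattice_translation[OF assms] by simp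

lemma infdist_le_imp_mem_scaled_convex:
  fixes C :: "'a::euclidean_space set"
  assumes "convex C" "closed C" "cball 0 e \<subseteq> C" "t > 0" "infdist z C \<le> t * e"
  shows "z \<in> (\<lambda>x. (1 + t) *\<^sub>R x) ` C"
proof -
  have "0 \<le> t * e" using assms(5) infdist_nonneg[of z C] by linarith
  then have "e \<ge> 0" using assms(4) by (simp add: zero_le_mult_iff)
  then have "C \<noteq> {}" using assms(3) by auto
  then obtain v where "v \<in> C" and v: "dist z v \<le> t * e"
    using infdist_attains_inf[OF assms(2)] assms(5) by metis
  define w where "w = (1 / t) *\<^sub>R (z - v)"
  have "norm w = dist z v / t" using assms(4) by (simp add: w_def dist_norm)
  then have "norm w \<le> e" using v assms(4) by (simp add: divide_le_eq mult.commute)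
  then have "w \<in> C" using assms(3) by auto
  have "(1 / (1 + t)) *\<^sub>R v + (t / (1 + t)) *\<^sub>R w \<in> C"
    using convexD[OF assms(1) \<open>v \<in> C\<close> \<open>w \<in> C\<close>] assms(4) by (simp add: add_divide_distrib[symmetric])
  moreover have "z = (1 + t) *\<^sub>R ((1 / (1 + t)) *\<^sub>R v + (t / (1 + t)) *\<^sub>R w)"
    using assms(4) by (simp add: w_def algebra_simps)
  ultimately show ?thesis by blast
qed

lemma nn_integral_indicator_translation:
  fixes c :: "'a::euclidean_space"
  assumes "X \<in> sets borel"
  shows "(\<integral>\<^sup>+\<theta>. indicator X (c + \<theta>) \<partial>lborel) = emeasure lborel X"
proof -
  have "(\<integral>\<^sup>+x. indicator X x \<partial>distr lborel borel ((+) c)) = (\<integral>\<^sup>+\<theta>. indicator X (c + \<theta>) \<partial>lborel)"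
    using assms by (intro nn_integral_distr) auto
  then show ?thesis using assms by (simp add: lborel_distr_plus)
qed

lemma emeasure_lborel_scaleR_compact:
  fixes S :: "'a::euclidean_space set"
  assumes "compact S"
  shows "emeasure lborel ((\<lambda>x. c *\<^sub>R x) ` S) = ennreal (\<bar>c\<bar> ^ DIM('a)) * emeasure lborel S"
proof -
  have "compact ((\<lambda>x. c *\<^sub>R x) ` S)" using assms by (rule compact_scaling)
  then have "emeasure lborel ((\<lambda>x. c *\<^sub>R x) ` S) = emeasure lebesgue ((\<lambda>x. c *\<^sub>R x + 0) ` S)"
    by (simp add: borel_compact)
  also have "\<dots> = ennreal (\<bar>c\<bar> ^ DIM('a)) * emeasure lebesgue S"
    by (rule emeasure_lebesgue_affine)
  also have "\<dots> = ennreal (\<bar>c\<bar> ^ DIM('a)) * emeasure lborel S"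
    using assms by (simp add: borel_compact)
  finally show ?thesis .
qed

lemma emeasure_lborel_ball_pos:
  fixes c :: "'a::euclidean_space"
  assumes "0 < r"
  shows "0 < emeasure lborel (ball c r)"
proof -
  have "emeasure lborel (ball c r) = ennreal (measure lborel (ball c r))"
    using emeasure_lborel_ball_finite
    by (intro emeasure_eq_ennreal_measure) (simp add: less_top[symmetric])
  then show ?thesis using content_ball_pos[OF assms] by (simp only: ennreal_less_zero_iff)
qed

lemma lattice_separated:
  assumes "is_lattice L" "l \<in> L" "l \<noteq> 0"
  shows "2 * packing_radius L \<le> dist 0 l"
  using packing_radius_le_half_dist[OF lattice_zero[OF assms(1)] assms(2)] assms(3) by simp

lemma emeasure_Vor_lattice:
  fixes L :: "'a::euclidean_space set"
  assumes "is_lattice L" "packing_radius L > 0"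
  shows "0 < emeasure lborel (Vor L 0)" and "emeasure lborel (Vor L 0) < \<infinity>"
proof -
  have V: "Vor L 0 \<in> sets borel" using sets_borel_Vor countable_lattice assms(1) by blast
  have "ball 0 (packing_radius L) \<subseteq> Vor L 0"
    using lattice_separated[OF assms(1)] by (intro ball_subset_Vor)
  then have "emeasure lborel (ball (0::'a) (packing_radius L)) \<le> emeasure lborel (Vor L 0)"
    using V by (intro emeasure_mono) auto
  moreover have "0 < emeasure lborel (ball (0::'a) (packing_radius L))"
    using assms(2) by (rule emeasure_lborel_ball_pos)
  ultimately show "0 < emeasure lborel (Vor L 0)" by simp
  obtain R where "\<And>z. \<exists>l\<in>L. dist z l \<le> R" using lattice_relatively_dense[OF assms(1)] by blast
  then have "Vor L 0 \<subseteq> cball 0 R" using Vor_subset_Vor_closed Vor_closed_subset_cball by blast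
  then show "emeasure lborel (Vor L 0) < \<infinity>"
    using emeasure_mono[of "Vor L 0" "cball 0 R" lborel] emeasure_lborel_cball_finite[of 0 R]
    by (auto intro: order.strict_trans1)
qed

lemma emeasure_Vor_plus_le:
  fixes L :: "'a::euclidean_space set"
  assumes "is_lattice L" "packing_radius L = \<epsilon>" "\<epsilon> > 0" "q > 0"
  shows "emeasure lborel (Vor_plus q \<epsilon> L 0)
    \<le> ennreal ((1 + 2 * q) ^ DIM('a)) * emeasure lborel (Vor L 0)"
proof -
  define C where "C = Vor_closed L 0"
  have sep: "\<And>l. l \<in> L \<Longrightarrow> l \<noteq> 0 \<Longrightarrow> 2 * \<epsilon> \<le> dist 0 l"
    using lattice_separated[OF assms(1)] assms(2) by blast
  obtain R where "\<And>z. \<exists>l\<in>L. dist z l \<le> R" using lattice_relatively_dense[OF assms(1)] by blast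
  then have "compact C"
    unfolding C_def using closed_Vor_closed Vor_closed_subset_cball
    by (meson bounded_cball bounded_subset compact_eq_bounded_closed)
  have "0 \<in> Vor L 0" using ball_subset_Vor[of L 0 \<epsilon>, OF sep] assms(3) by auto
  have "Vor_plus q \<epsilon> L 0 \<subseteq> (\<lambda>x. (1 + 2 * q) *\<^sub>R x) ` C"
  proof
    fix z assume "z \<in> Vor_plus q \<epsilon> L 0"
    moreover have "infdist z C \<le> infdist z (Vor L 0)"
      unfolding C_def using Vor_subset_Vor_closed \<open>0 \<in> Vor L 0\<close> by (intro infdist_mono) auto
    ultimately have "infdist z C \<le> 2 * q * \<epsilon>" unfolding Vor_plus_def by simp
    then show "z \<in> (\<lambda>x. (1 + 2 * q) *\<^sub>R x) ` C"
      using cball_subset_Vor_closed[of L 0 \<epsilon>, OF sep] assms(4)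
      by (intro infdist_le_imp_mem_scaled_convex) (simp_all add: C_def convex_Vor_closed closed_Vor_closed)
  qed
  then have "emeasure lborel (Vor_plus q \<epsilon> L 0) \<le> emeasure lborel ((\<lambda>x. (1 + 2 * q) *\<^sub>R x) ` C)"
    using compact_scaling[OF \<open>compact C\<close>] by (intro emeasure_mono) (simp_all add: borel_compact)
  also have "\<dots> = ennreal ((1 + 2 * q) ^ DIM('a)) * emeasure lborel (Vor L 0)"
    using emeasure_lborel_scaleR_compact[OF \<open>compact C\<close>] assms(4)
    by (simp add: C_def emeasure_Vor_closed countable_lattice[OF assms(1)])
  finally show ?thesis .
qed

lemma borel_measurable_nn_integral_count_space:
  fixes f :: "'i \<Rightarrow> 'a \<Rightarrow> ennreal"
  assumes "countable I" and [measurable]: "\<And>i. i \<in> I \<Longrightarrow> f i \<in> borel_measurable M"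
  shows "(\<lambda>x. \<integral>\<^sup>+i. f i x \<partial>count_space I) \<in> borel_measurable M"
proof (cases "finite I")
  case True
  then show ?thesis by (simp add: nn_integral_count_space_finite)
next
  case False
  then have "(\<integral>\<^sup>+i. f i x \<partial>count_space I) = (\<Sum>n. f (from_nat_into I n) x)" for x
    using bij_betw_from_nat_into[OF assms(1)]
    by (simp add: nn_integral_bij_count_space[symmetric] nn_integral_count_space_nat)
  moreover have "from_nat_into I n \<in> I" for n
    using False by (intro from_nat_into) auto
  ultimately show ?thesis by simp
qed

lemma count_translates_eq_nn_integral:
  "emeasure (count_space I) {i\<in>I. \<tau> i + \<theta> \<in> W} = (\<integral>\<^sup>+i. indicator W (\<tau> i + \<theta>) \<partial>count_space I)"
proof -
  have "(\<integral>\<^sup>+i. indicator W (\<tau> i + \<theta>) \<partial>count_space I)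
    = (\<integral>\<^sup>+i. indicator {i\<in>I. \<tau> i + \<theta> \<in> W} i \<partial>count_space I)"
    by (intro nn_integral_cong) (simp add: indicator_def)
  then show ?thesis by simp
qed

lemma borel_measurable_count_translates:
  fixes \<tau> :: "'i \<Rightarrow> 'a::euclidean_space"
  assumes "countable I" "W \<in> sets borel"
  shows "(\<lambda>\<theta>. emeasure (count_space I) {i\<in>I. \<tau> i + \<theta> \<in> W}) \<in> borel_measurable borel"
  unfolding count_translates_eq_nn_integral
  using assms by (intro borel_measurable_nn_integral_count_space) auto

lemma nn_integral_count_translates_le:
  fixes V W :: "'a::euclidean_space set" and \<tau> :: "'i \<Rightarrow> 'a"
  assumes "countable I" "V \<in> sets borel" and [measurable]: "W \<in> sets borel"
    and disj: "disjoint_family_on (\<lambda>i. (+) (\<tau> i) ` V) I"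
  shows "(\<integral>\<^sup>+\<theta>\<in>V. emeasure (count_space I) {i\<in>I. \<tau> i + \<theta> \<in> W} \<partial>lborel) \<le> emeasure lborel W"
proof -
  have translate_borel[measurable]: "(+) (\<tau> i) ` V \<in> sets borel" for i
  proof -
    have "(\<lambda>z. z - \<tau> i) -` V \<in> sets borel"
      using measurable_sets[OF _ assms(2), of "\<lambda>z. z - \<tau> i" borel] by simp
    then show ?thesis by (simp add: vimage_def mem_translation_image_iff[symmetric])
  qed
  have "emeasure (count_space I) {i\<in>I. \<tau> i + \<theta> \<in> W} * indicator V \<theta>
    = (\<integral>\<^sup>+i. indicator (W \<inter> (+) (\<tau> i) ` V) (\<tau> i + \<theta>) \<partial>count_space I)" for \<theta>
  proof (cases "\<theta> \<in> V")
    case True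
    then have "\<tau> i + \<theta> \<in> (+) (\<tau> i) ` V" for i by blast
    with True show ?thesis unfolding count_translates_eq_nn_integral by (simp add: indicator_def)
  next
    case False
    then have "\<tau> i + \<theta> \<notin> (+) (\<tau> i) ` V" for i by auto
    with False show ?thesis by (simp add: indicator_def)
  qed
  then have "(\<integral>\<^sup>+\<theta>. emeasure (count_space I) {i\<in>I. \<tau> i + \<theta> \<in> W} * indicator V \<theta> \<partial>lborel)
    = (\<integral>\<^sup>+\<theta>. \<integral>\<^sup>+i. indicator (W \<inter> (+) (\<tau> i) ` V) (\<tau> i + \<theta>) \<partial>count_space I \<partial>lborel)"
    by simp
  also have "\<dots> = (\<integral>\<^sup>+i. \<integral>\<^sup>+\<theta>. indicator (W \<inter> (+) (\<tau> i) ` V) (\<tau> i + \<theta>) \<partial>lborel \<partial>count_space I)"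
    using assms by (intro nn_integral_count_space_nn_integral) auto
  also have "\<dots> = (\<integral>\<^sup>+i. emeasure lborel (W \<inter> (+) (\<tau> i) ` V) \<partial>count_space I)"
    using assms(3) translate_borel by (intro nn_integral_cong nn_integral_indicator_translation sets.Int)
  also have "\<dots> = emeasure lborel (\<Union>i\<in>I. W \<inter> (+) (\<tau> i) ` V)"
    using assms translate_borel disj
    by (intro emeasure_UN_countable[symmetric]) (auto simp: disjoint_family_on_def)
  also have "\<dots> \<le> emeasure lborel W"
    using assms(3) by (intro emeasure_mono) auto
  finally show ?thesis .
qed

text \<open>The paper's N(\<theta>); the cardinality is taken in ennreal, so an infinite set counts as \<infinity>.\<close>
definition Vor_plus_count :: "real \<Rightarrow> real \<Rightarrow> 'a::euclidean_space set \<Rightarrow> 'a \<Rightarrow> 'a \<Rightarrow> ennreal" where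
  "Vor_plus_count q e L x \<theta> = emeasure (count_space L) {l\<in>L. x + \<theta> \<in> Vor_plus q e L l}"

lemma Vor_plus_count_eq:
  assumes "is_lattice L"
  shows "Vor_plus_count q e L x \<theta> = emeasure (count_space L) {l\<in>L. (x - l) + \<theta> \<in> Vor_plus q e L 0}"
proof -
  have "{l\<in>L. x + \<theta> \<in> Vor_plus q e L l} = {l\<in>L. (x - l) + \<theta> \<in> Vor_plus q e L 0}"
    by (auto simp: Vor_plus_lattice_translate[OF assms] mem_translation_image_iff diff_add_eq)
  then show ?thesis unfolding Vor_plus_count_def by simp
qed

lemma disjoint_family_on_Vor_lattice_translates:
  assumes "is_lattice L"
  shows "disjoint_family_on (\<lambda>l. (+) (x - l) ` Vor L 0) L"
  unfolding disjoint_family_on_def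
proof (intro ballI impI)
  fix l l' assume "l \<in> L" "l' \<in> L" "l \<noteq> l'"
  then have "Vor L (- l) \<inter> Vor L (- l') = {}"
    using lattice_uminus[OF assms] by (intro Vor_disjoint) auto
  then have "(+) x ` Vor L (- l) \<inter> (+) x ` Vor L (- l') = {}"
    by (simp add: image_Int[symmetric])
  moreover have "(+) (x - m) ` Vor L 0 = (+) x ` Vor L (- m)" if "m \<in> L" for m
    using Vor_lattice_translate[OF assms lattice_uminus[OF assms that]]
    by (simp add: image_image algebra_simps)
  ultimately show "(+) (x - l) ` Vor L 0 \<inter> (+) (x - l') ` Vor L 0 = {}"
    using \<open>l \<in> L\<close> \<open>l' \<in> L\<close> by simp
qed

lemma borel_measurable_Vor_plus_count:
  assumes "is_lattice L"
  shows "Vor_plus_count q e L x \<in> borel_measurable borel"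
  unfolding Vor_plus_count_eq[OF assms, abs_def]
  using countable_lattice[OF assms] borel_closed[OF closed_Vor_plus]
  by (rule borel_measurable_count_translates)

lemma nn_integral_Vor_plus_count_le:
  fixes L :: "'a::euclidean_space set"
  assumes "is_lattice L" "packing_radius L = \<epsilon>" "\<epsilon> > 0" "q > 0"
  shows "(\<integral>\<^sup>+\<theta>\<in>Vor L 0. Vor_plus_count q \<epsilon> L x \<theta> \<partial>lborel)
    \<le> ennreal ((1 + 2 * q) ^ DIM('a)) * emeasure lborel (Vor L 0)"
proof -
  have "(\<integral>\<^sup>+\<theta>\<in>Vor L 0. Vor_plus_count q \<epsilon> L x \<theta> \<partial>lborel) \<le> emeasure lborel (Vor_plus q \<epsilon> L 0)"
    unfolding Vor_plus_count_eq[OF assms(1)]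
    using countable_lattice[OF assms(1)] sets_borel_Vor[OF countable_lattice[OF assms(1)]]
      borel_closed[OF closed_Vor_plus]
      disjoint_family_on_Vor_lattice_translates[OF assms(1)]
    by (rule nn_integral_count_translates_le)
  also have "\<dots> \<le> ennreal ((1 + 2 * q) ^ DIM('a)) * emeasure lborel (Vor L 0)"
    using assms by (rule emeasure_Vor_plus_le)
  finally show ?thesis .
qed

lemma emeasure_count_space_le_ennreal_iff:
  assumes "X \<subseteq> A" "0 \<le> K"
  shows "emeasure (count_space A) X \<le> ennreal K \<longleftrightarrow> finite X \<and> real (card X) \<le> K"
  using assms by (simp add: emeasure_count_space ennreal_of_nat_eq_real_of_nat top_unique)

lemma measure_uniform_measure_Markov:
  fixes f :: "'a \<Rightarrow> ennreal"
  assumes [measurable]: "V \<in> sets M" "f \<in> borel_measurable M"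
    and V: "emeasure M V \<noteq> 0" "emeasure M V \<noteq> \<infinity>"
    and integral: "(\<integral>\<^sup>+x\<in>V. f x \<partial>M) \<le> ennreal a * emeasure M V"
    and "0 \<le> a" "0 < K"
  shows "1 - a / K \<le> measure (uniform_measure M V) {x\<in>V. f x \<le> ennreal K}"
proof -
  define B where "B = {x\<in>V. ennreal K < f x}"
  have [measurable]: "B \<in> sets M" unfolding B_def by measurable
  have "ennreal K * emeasure M B = (\<integral>\<^sup>+x. ennreal K * indicator B x \<partial>M)"
    by (simp add: nn_integral_cmult_indicator)
  also have "\<dots> \<le> (\<integral>\<^sup>+x\<in>V. f x \<partial>M)"
    by (intro nn_integral_mono) (auto simp: B_def indicator_def less_imp_le)
  also have "\<dots> \<le> ennreal a * emeasure M V" by (rule integral)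
  finally have "ennreal K * emeasure M B \<le> ennreal a * emeasure M V" .
  moreover have "emeasure M B \<noteq> \<infinity>"
    using emeasure_mono[of B V M] V(2) by (auto simp: B_def top_unique)
  ultimately have "ennreal (K * measure M B) \<le> ennreal (a * measure M V)"
    using V(2) assms(6,7) by (simp add: emeasure_eq_ennreal_measure ennreal_mult)
  then have KB: "K * measure M B \<le> a * measure M V"
    using assms(6) by (simp add: ennreal_le_iff)
  have "V \<inter> {x\<in>V. f x \<le> ennreal K} = V - B" by (auto simp: B_def)
  then have "measure (uniform_measure M V) {x\<in>V. f x \<le> ennreal K} = measure M (V - B) / measure M V"
    using V by simp
  also have "\<dots> = (measure M V - measure M B) / measure M V"
    using V by (subst measure_Diff) (auto simp: B_def top_unique)
  moreover have "0 < measure M V"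
    using V measure_nonneg[of M V] by (simp add: emeasure_eq_ennreal_measure order_less_le)
  then have "1 - a / K \<le> (measure M V - measure M B) / measure M V"
    using KB assms(7) by (simp add: field_simps)
  ultimately show ?thesis by simp
qed

theorem lemma31:
  fixes \<epsilon> q :: real and L :: "'a::euclidean_space set" and x :: 'a
  assumes "\<epsilon> > 0" and "q > 0" and "eps_lattice \<epsilon> L"
  shows "measure (uniform_measure lborel (Vor L 0))
           {\<theta> \<in> Vor L 0. finite {l\<in>L. x + \<theta> \<in> Vor_plus q \<epsilon> L l} \<and>
              real (card {l\<in>L. x + \<theta> \<in> Vor_plus q \<epsilon> L l}) \<le> (1 + 2*q) powr (2 * real DIM('a))}
         \<ge> 1 - (1 + 2*q) powr (- real DIM('a))"
proof -
  have lat: "is_lattice L" and pr: "packing_radius L = \<epsilon>"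
    using assms(3) by (auto simp: eps_lattice_def)
  define K where "K = (1 + 2*q) powr (2 * real DIM('a))"
  have "1 - (1 + 2 * q) ^ DIM('a) / K
      \<le> measure (uniform_measure lborel (Vor L 0)) {\<theta>\<in>Vor L 0. Vor_plus_count q \<epsilon> L x \<theta> \<le> ennreal K}"
    using emeasure_Vor_lattice[OF lat] pr assms(1,2) sets_borel_Vor[OF countable_lattice[OF lat]]
      borel_measurable_Vor_plus_count[OF lat]
    by (intro measure_uniform_measure_Markov nn_integral_Vor_plus_count_le lat) (simp_all add: K_def)
  moreover have "(1 + 2 * q) ^ DIM('a) / K = (1 + 2*q) powr (- real DIM('a))"
    using assms(2) by (simp add: K_def powr_realpow[symmetric] powr_diff[symmetric])
  moreover have "Vor_plus_count q \<epsilon> L x \<theta> \<le> ennreal K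
      \<longleftrightarrow> finite {l\<in>L. x + \<theta> \<in> Vor_plus q \<epsilon> L l}
        \<and> real (card {l\<in>L. x + \<theta> \<in> Vor_plus q \<epsilon> L l}) \<le> K" for \<theta>
    unfolding Vor_plus_count_def by (rule emeasure_count_space_le_ennreal_iff) (auto simp: K_def)
  ultimately show ?thesis unfolding K_def by simp
qed

end
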